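(* Let $m\ge2$, let $C_1,\dots,C_m$ be real full-row-rank matrices with $n$ columns, $P_i=C_i'(C_iC_i')^{-1}C_i$, and let $M$ be the $mn\times mn$ matrix of the map $(x_1,\dots,x_m)\mapsto\big(x_i-\tfrac12P_i(x_i-x_{i-1})\big)_{i=1}^m$ with $x_0:=x_m$. Suppose that for all $x_1,\dots,x_m\in\mathbb R^n$, $C_ix_i=C_ix_{i-1}$ for all $i$ implies $x_1=\cdots=x_m$ (well-configuredness of the directed cycle $1\to\cdots\to m\to1$). Then the eigenvalue $1$ of $M$ has algebraic multiplicity exactly $n$ (equal to its geometric multiplicity).
   Context: $'$ denotes transpose; $P_i$ is the orthogonal projection onto $(\ker C_i)^\perp$. *)

theory Defs
  imports "Jordan_Normal_Form.Jordan_Normal_Form_Uniqueness" "Jordan_Normal_Form.DL_Rank"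
begin

(* Two-sided inverse of a square matrix (well defined when it exists). *)
definition inv_mat :: "real mat \<Rightarrow> real mat" where
  "inv_mat A = (SOME B. B \<in> carrier_mat (dim_row A) (dim_row A) \<and>
                        A * B = 1\<^sub>m (dim_row A) \<and> B * A = 1\<^sub>m (dim_row A))"

definition proj_mat :: "real mat \<Rightarrow> real mat" where
  "proj_mat C = transpose_mat C * inv_mat (C * transpose_mat C) * C"

definition full_row_rank :: "real mat \<Rightarrow> bool" where
  "full_row_rank C \<longleftrightarrow> vec_space.rank (dim_row C) C = dim_row C"

(* blocks are indexed 0..<m; block i of a vector of length m*n *)
definition blk :: "nat \<Rightarrow> real vec \<Rightarrow> nat \<Rightarrow> real vec" where
  "blk n x i = vec n (\<lambda>p. x $ (i * n + p))"

definition pred_cyc :: "nat \<Rightarrow> nat \<Rightarrow> nat" where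
  "pred_cyc m i = (i + m - 1) mod m"

(* the linear map (x_i)_i |-> (x_i - 1/2 P_i (x_i - x_{i-1}))_i on R^{mn} *)
definition cyc_map :: "nat \<Rightarrow> nat \<Rightarrow> (nat \<Rightarrow> real mat) \<Rightarrow> real vec \<Rightarrow> real vec" where
  "cyc_map m n C x = vec (m * n) (\<lambda>a.
      x $ a - (1/2) * ((proj_mat (C (a div n)) *\<^sub>v
                 (blk n x (a div n) - blk n x (pred_cyc m (a div n)))) $ (a mod n)))"

definition cyc_matrix :: "nat \<Rightarrow> nat \<Rightarrow> (nat \<Rightarrow> real mat) \<Rightarrow> real mat" where
  "cyc_matrix m n C = mat (m * n) (m * n) (\<lambda>(a, b). cyc_map m n C (unit_vec (m * n) b) $ a)"

definition alg_mult :: "real mat \<Rightarrow> real \<Rightarrow> nat" where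
  "alg_mult A ev = Polynomial.order ev (char_poly A)"

definition geom_mult :: "real mat \<Rightarrow> real \<Rightarrow> nat" where
  "geom_mult A ev = kernel_dim (char_matrix A ev)"

end

theory Submission
  imports Defs "Jordan_Normal_Form.Jordan_Normal_Form_Existence"
begin

(* Write N = M - I. Block i of N x is -1/2 P_i d_i with d_i = x_i - x_(i-1), and P_i v = 0 iff
   C_i v = 0, so well-configuredness makes ker N the space of consensus vectors (all blocks
   equal), which has dimension n. If N^2 x = 0, then N x is a consensus vector c with
   c = -1/2 P_i d_i for every i. Since P_i is a symmetric idempotent, <c, d_i> = -2 |c|^2,
   whereas the d_i sum to zero around the cycle; hence m |c|^2 = 0, so ker N^2 = ker N. Over the
   complex numbers this means that all Jordan blocks of M for the eigenvalue 1 are 1 x 1, so the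
   algebraic multiplicity equals the geometric one. *)

section \<open>Jordan blocks of size one\<close>

lemma sum_list_min_one_eq_if_min_two_eq:
  fixes L :: "nat list"
  assumes "sum_list (map (min 1) L) = sum_list (map (min 2) L)"
  shows "sum_list (map (min 1) L) = sum_list L"
  using assms
proof (induction L)
  case (Cons a L)
  have "sum_list (map (min 1) L) \<le> sum_list (map (min 2) L)"
    by (rule sum_list_mono) simp
  with Cons.prems have "a \<le> 1" and "sum_list (map (min 1) L) = sum_list (map (min 2) L)"
    by auto
  with Cons.IH show ?case by simp
qed simp

lemma order_char_poly_eq_kernel_dim:
  fixes A :: "complex mat"
  assumes A: "A \<in> carrier_mat n n"
    and ker: "mat_kernel (char_matrix A e ^\<^sub>m 2) = mat_kernel (char_matrix A e)"
  shows "Polynomial.order e (char_poly A) = kernel_dim (char_matrix A e)"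
proof -
  obtain as where "char_poly A = (\<Prod>a\<leftarrow>as. [:- a, 1:])"
    using char_poly_factorized[OF A] by blast
  from jordan_nf_exists[OF A this] obtain n_as where jnf: "jordan_nf A n_as" by blast
  let ?L = "map fst [(k, e')\<leftarrow>n_as. e' = e]"
  (* dim ker (A - e I)^k is the sum of min k s over the sizes s of the Jordan blocks for e *)
  have dim1: "dim_gen_eigenspace A e 1 = kernel_dim (char_matrix A e)"
    using A by (simp add: dim_gen_eigenspace_def)
  moreover have "dim_gen_eigenspace A e 2 = kernel_dim (char_matrix A e)"
    using A ker by (simp add: dim_gen_eigenspace_def kernel_dim_def)
  ultimately have "sum_list (map (min 1) ?L) = sum_list (map (min 2) ?L)"
    using dim_gen_eigenspace[OF jnf] by metis
  then have "sum_list (map (min 1) ?L) = sum_list ?L"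
    by (rule sum_list_min_one_eq_if_min_two_eq)
  then show ?thesis
    using jordan_nf_order[OF jnf, of e] dim1 dim_gen_eigenspace[OF jnf, of e 1]
    by (simp add: case_prod_beta' cong: filter_cong)
qed

lemma order_of_real_char_poly:
  assumes "A \<in> carrier_mat n n"
  shows "Polynomial.order (complex_of_real e) (char_poly (map_mat of_real A)) =
    Polynomial.order e (char_poly A)"
proof -
  interpret of_real: map_poly_inj_idom_divide_hom "of_real :: real \<Rightarrow> complex"
    by unfold_locales auto
  show ?thesis
    unfolding of_real_hom.char_poly_hom[OF assms] by (rule of_real.order_hom)
qed

section \<open>Complexification of kernels\<close>

lemma map_vec_Re_of_real_mult_mat_vec:
  assumes "A \<in> carrier_mat k l" and "x \<in> carrier_vec l"
  shows "map_vec Re (map_mat complex_of_real A *\<^sub>v x) = A *\<^sub>v map_vec Re x"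
  by (rule eq_vecI) (use assms in \<open>auto simp: scalar_prod_def Re_sum\<close>)

lemma map_vec_Im_of_real_mult_mat_vec:
  assumes "A \<in> carrier_mat k l" and "x \<in> carrier_vec l"
  shows "map_vec Im (map_mat complex_of_real A *\<^sub>v x) = A *\<^sub>v map_vec Im x"
  by (rule eq_vecI) (use assms in \<open>auto simp: scalar_prod_def Im_sum\<close>)

lemma complex_vec_eq_0_iff:
  "x = 0\<^sub>v k \<longleftrightarrow> map_vec Re x = 0\<^sub>v k \<and> map_vec Im x = 0\<^sub>v k"
  by (auto simp: vec_eq_iff complex_eq_iff)

lemma mat_kernel_of_real_iff:
  assumes A: "A \<in> carrier_mat k l"
  shows "x \<in> mat_kernel (map_mat complex_of_real A) \<longleftrightarrow>
    map_vec Re x \<in> mat_kernel A \<and> map_vec Im x \<in> mat_kernel A"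
proof (cases "x \<in> carrier_vec l")
  case True
  then show ?thesis
    using A complex_vec_eq_0_iff[of "map_mat complex_of_real A *\<^sub>v x" k]
    by (simp add: mat_kernel_def map_vec_Re_of_real_mult_mat_vec map_vec_Im_of_real_mult_mat_vec)
qed (use A in \<open>auto simp: mat_kernel_def\<close>)

lemma alg_mult_eq_kernel_dim_of_real:
  assumes A: "A \<in> carrier_mat k k"
    and ker: "mat_kernel (char_matrix A e ^\<^sub>m 2) = mat_kernel (char_matrix A e)"
  shows "alg_mult A e =
    kernel_dim (map_mat complex_of_real (char_matrix A e))"
proof -
  let ?N = "char_matrix A e"
  have N: "?N \<in> carrier_mat k k" using A by simp
  have of_real_char: "char_matrix (map_mat of_real A) (of_real e) = map_mat complex_of_real ?N"
    by (rule eq_matI) (use A in \<open>auto simp: char_matrix_def\<close>)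
  have "mat_kernel (map_mat complex_of_real ?N ^\<^sub>m 2) = mat_kernel (map_mat complex_of_real ?N)"
    unfolding of_real_hom.mat_hom_pow[OF N, symmetric]
    using mat_kernel_of_real_iff[OF N] mat_kernel_of_real_iff[OF pow_carrier_mat[OF N]] ker
    by blast
  then show ?thesis
    unfolding alg_mult_def order_of_real_char_poly[OF A, symmetric]
    using order_char_poly_eq_kernel_dim[of "map_mat complex_of_real A" k "of_real e"] A
    by (simp add: of_real_char)
qed

section \<open>Periodic vectors\<close>

definition periodic_vecs :: "nat \<Rightarrow> nat \<Rightarrow> 'a vec set" where
  "periodic_vecs m n = {x \<in> carrier_vec (m * n). \<forall>a < m * n. x $ a = x $ (a mod n)}"

(* Row i is e_i - e_j with j = m n - n + (i mod n): it compares an entry before the last period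
   with its copy in the last period. The pivots lie on the diagonal. *)
definition period_constraint_mat :: "nat \<Rightarrow> nat \<Rightarrow> 'a :: field mat" where
  "period_constraint_mat m n = mat (m * n - n) (m * n)
     (\<lambda>(i, j). if j = i then 1 else if j = m * n - n + i mod n then -1 else 0)"

lemma dim_period_constraint_mat [simp]:
  "dim_row (period_constraint_mat m n) = m * n - n"
  "dim_col (period_constraint_mat m n) = m * n"
  by (simp_all add: period_constraint_mat_def)

lemma period_constraint_mat_carrier:
  "period_constraint_mat m n \<in> carrier_mat (m * n - n) (m * n)"
  by (rule carrier_matI) simp_all

lemma row_period_constraint_mat:
  assumes i: "i < m * n - n"
  shows "row (period_constraint_mat m n) i =
    unit_vec (m * n) i - unit_vec (m * n) (m * n - n + i mod n)"
proof -
  define j where "j = m * n - n + i mod n"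
  have "i mod n < n" using i by (cases n) auto
  then have "j \<noteq> i" using i unfolding j_def by linarith
  have entry: "period_constraint_mat m n $$ (i, k) = (if k = i then 1 else if k = j then -1 else 0)"
    if "k < m * n" for k
    using i that by (simp add: period_constraint_mat_def j_def)
  have "row (period_constraint_mat m n :: 'a mat) i = unit_vec (m * n) i - unit_vec (m * n) j"
  proof (rule eq_vecI)
    fix k assume "k < dim_vec (unit_vec (m * n) i - unit_vec (m * n) j :: 'a vec)"
    then have k: "k < m * n" by simp
    have "row (period_constraint_mat m n :: 'a mat) i $ k = period_constraint_mat m n $$ (i, k)"
      using i k by simp
    also have "\<dots> = (if k = i then 1 else if k = j then -1 else 0)" by (rule entry[OF k])
    also have "\<dots> = (unit_vec (m * n) i - unit_vec (m * n) j) $ k"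
      using k \<open>j \<noteq> i\<close> by (simp add: unit_vec_def)
    finally show "row (period_constraint_mat m n :: 'a mat) i $ k =
      (unit_vec (m * n) i - unit_vec (m * n) j) $ k" .
  qed simp
  then show ?thesis unfolding j_def .
qed

lemma row_echelon_form_period_constraint_mat:
  "row_echelon_form (period_constraint_mat m n :: 'a :: field mat)"
  unfolding row_echelon_form_def
  by (intro exI[of _ "\<lambda>i. i"] pivot_funI) (auto simp: period_constraint_mat_def)

lemma nonzero_rows_period_constraint_mat:
  "card {i. i < m * n - n \<and> row (period_constraint_mat m n :: 'a :: field mat) i \<noteq> 0\<^sub>v (m * n)}
    = m * n - n"
proof -
  have "row (period_constraint_mat m n :: 'a mat) i $ i = 1" if "i < m * n - n" for i
    using that by (simp add: period_constraint_mat_def)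
  moreover have "i < m * n" if "i < m * n - n" for i
    using that by linarith
  ultimately have "row (period_constraint_mat m n :: 'a mat) i \<noteq> 0\<^sub>v (m * n)"
    if "i < m * n - n" for i
    using that by (metis index_zero_vec(1) zero_neq_one)
  then have "{i. i < m * n - n \<and> row (period_constraint_mat m n :: 'a mat) i \<noteq> 0\<^sub>v (m * n)}
    = {..<m * n - n}"
    by auto
  then show ?thesis by simp
qed

lemma period_constraint_mat_mult_vec:
  assumes x: "x \<in> carrier_vec (m * n)" and i: "i < m * n - n"
  shows "(period_constraint_mat m n *\<^sub>v x) $ i = x $ i - x $ (m * n - n + i mod n)"
proof -
  have "i mod n < n" using i by (cases n) auto
  then show ?thesis
    using i x by (simp add: row_period_constraint_mat minus_scalar_prod_distrib[of _ "m * n"]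
        period_constraint_mat_carrier[THEN carrier_matD(1)])
qed

lemma mat_kernel_period_constraint_mat:
  "mat_kernel (period_constraint_mat m n :: 'a :: field mat) = periodic_vecs m n"
proof (rule Set.set_eqI, rule iffI)
  fix x :: "'a vec"
  assume "x \<in> mat_kernel (period_constraint_mat m n)"
  then have x: "x \<in> carrier_vec (m * n)"
    and E: "period_constraint_mat m n *\<^sub>v x = 0\<^sub>v (m * n - n)"
    using period_constraint_mat_carrier unfolding mat_kernel_def by auto
  have last: "x $ a = x $ (m * n - n + a mod n)" if "a < m * n" for a
  proof (cases "a < m * n - n")
    case True
    then show ?thesis
      using period_constraint_mat_mult_vec[OF x True] E by (metis eq_iff_diff_eq_0 index_zero_vec(1))
  next
    case False
    have "m * n - n = (m - 1) * n" by (simp add: diff_mult_distrib)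
    moreover have "a = m * n - n + (a - (m * n - n))" and "a - (m * n - n) < n"
      using that False by linarith+
    ultimately show ?thesis by (metis mod_less mod_mult_self3)
  qed
  show "x \<in> periodic_vecs m n"
    unfolding periodic_vecs_def
  proof (intro CollectI conjI allI impI x)
    fix a assume a: "a < m * n"
    then have "a mod n < m * n" by (meson le_less_trans mod_less_eq_dividend)
    then show "x $ a = x $ (a mod n)" using last[OF a] last[of "a mod n"] by simp
  qed
next
  fix x :: "'a vec"
  assume "x \<in> periodic_vecs m n"
  then have x: "x \<in> carrier_vec (m * n)" and per: "\<And>a. a < m * n \<Longrightarrow> x $ a = x $ (a mod n)"
    unfolding periodic_vecs_def by auto
  have "period_constraint_mat m n *\<^sub>v x = 0\<^sub>v (m * n - n)"
  proof (rule eq_vecI)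
    fix i assume "i < dim_vec (0\<^sub>v (m * n - n) :: 'a vec)"
    then have i: "i < m * n - n" by simp
    have "m * n - n = (m - 1) * n" by (simp add: diff_mult_distrib)
    then have "(m * n - n + i mod n) mod n = i mod n" by simp
    moreover have "i mod n < n" using i by (cases n) auto
    ultimately show "(period_constraint_mat m n *\<^sub>v x) $ i = 0\<^sub>v (m * n - n) $ i"
      using per[of i] per[of "m * n - n + i mod n"] i period_constraint_mat_mult_vec[OF x i] by simp
  qed (simp add: period_constraint_mat_def)
  then show "x \<in> mat_kernel (period_constraint_mat m n)"
    using x period_constraint_mat_carrier unfolding mat_kernel_def by auto
qed

lemma kernel_dim_cong:
  "dim_col A = dim_col B \<Longrightarrow> mat_kernel A = mat_kernel B \<Longrightarrow> kernel_dim A = kernel_dim B"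
  unfolding kernel_dim_def by simp

lemma kernel_dim_eq_if_mat_kernel_periodic:
  fixes A :: "'a :: field mat"
  assumes m: "0 < m" and A: "A \<in> carrier_mat k (m * n)"
    and ker: "mat_kernel A = periodic_vecs m n"
  shows "kernel_dim A = n"
proof -
  let ?E = "period_constraint_mat m n :: 'a mat"
  have "kernel_dim A = kernel_dim ?E"
  proof (rule kernel_dim_cong)
    show "dim_col A = dim_col ?E" using A period_constraint_mat_carrier by simp
    show "mat_kernel A = mat_kernel ?E" unfolding ker mat_kernel_period_constraint_mat ..
  qed
  also have "\<dots> = m * n - (m * n - n)"
    unfolding kernel_dim_def dim_period_constraint_mat
      find_base_vectors(6)[OF row_echelon_form_period_constraint_mat period_constraint_mat_carrier]
      nonzero_rows_period_constraint_mat ..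
  also have "\<dots> = n" using m by simp
  finally show ?thesis .
qed

lemma periodic_vecs_Re_Im_iff:
  "x \<in> periodic_vecs m n \<longleftrightarrow>
    map_vec Re x \<in> periodic_vecs m n \<and> map_vec Im x \<in> periodic_vecs m n"
proof -
  have "(\<forall>a < m * n. x $ a = x $ (a mod n)) \<longleftrightarrow>
    (\<forall>a < m * n. map_vec Re x $ a = map_vec Re x $ (a mod n)) \<and>
    (\<forall>a < m * n. map_vec Im x $ a = map_vec Im x $ (a mod n))"
    if x: "x \<in> carrier_vec (m * n)"
  proof -
    have "a mod n < m * n" if "a < m * n" for a
      using that by (meson le_less_trans mod_less_eq_dividend)
    then show ?thesis using x by (auto simp: complex_eq_iff)
  qed
  then show ?thesis unfolding periodic_vecs_def by auto
qed

lemma mat_kernel_of_real_eq_periodic: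
  assumes "A \<in> carrier_mat k (m * n)" and "mat_kernel A = periodic_vecs m n"
  shows "mat_kernel (map_mat complex_of_real A) = periodic_vecs m n"
  using mat_kernel_of_real_iff[OF assms(1)] periodic_vecs_Re_Im_iff assms(2) by blast

section \<open>Orthogonal projections onto row spaces\<close>

lemma real_scalar_prod_self_eq_0_iff:
  fixes v :: "real vec"
  assumes "v \<in> carrier_vec k"
  shows "v \<bullet> v = 0 \<longleftrightarrow> v = 0\<^sub>v k"
proof -
  have "conjugate v = v" by (rule eq_vecI) (simp_all add: conjugate_vec_def)
  then show ?thesis using conjugate_square_eq_0_vec[OF assms] by simp
qed

lemma span_cols_eq_carrier_if_rank:
  assumes C: "(C :: 'a :: field mat) \<in> carrier_mat r k" and rk: "vec_space.rank r C = r"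
  shows "module.span class_ring (module_vec TYPE('a) r) (set (cols C)) = carrier_vec r"
proof -
  interpret vec_space "TYPE('a)" r .
  obtain S where S: "maximal S (\<lambda>T. T \<subseteq> set (cols C) \<and> lin_indpt T)"
    using maximal_exists[of "\<lambda>T. T \<subseteq> set (cols C) \<and> lin_indpt T" "card (set (cols C))" "{}"]
    by (meson List.finite_set card_mono empty_iff empty_subsetI finite_lin_indpt2 rev_finite_subset)
  have S_cols: "S \<subseteq> set (cols C)" and S_indpt: "lin_indpt S"
    using S unfolding maximal_def by auto
  have cols: "set (cols C) \<subseteq> carrier_vec r" using C cols_dim by blast
  have "card S = r" using rank_card_indpt[OF C S] rk by simp
  have "finite S" using S_cols finite_subset by blast
  then have "basis S"
    by (rule dim_li_is_basis[OF fin_dim _ _ S_indpt]) (use S_cols cols \<open>card S = r\<close> dim_is_n in auto)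
  then have "span S = carrier_vec r" unfolding basis_def by auto
  then show ?thesis
    using span_is_monotone[OF S_cols] span_closed[OF cols] by auto
qed

context
  fixes C :: "real mat" and r k :: nat
  assumes C: "C \<in> carrier_mat r k" and rank_C: "full_row_rank C"
begin

lemma transpose_mult_vec_eq_0_imp_eq_0:
  assumes y: "y \<in> carrier_vec r" and Ty: "transpose_mat C *\<^sub>v y = 0\<^sub>v k"
  shows "y = 0\<^sub>v r"
proof -
  interpret vec_space "TYPE(real)" r .
  have "rank C = r" using rank_C C unfolding full_row_rank_def by simp
  then have "y \<in> span (set (cols C))" using span_cols_eq_carrier_if_rank[OF C] y by simp
  then obtain a A where y_eq: "y = lincomb a A" and A: "A \<subseteq> set (cols C)"
    using in_spanE by blast
  have cols: "set (cols C) \<subseteq> carrier_vec r" using C cols_dim by blast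
  have orth: "u \<bullet> y = 0" if u_col: "u \<in> set (cols C)" for u
  proof -
    obtain j where j: "j < k" and u: "u = col C j" using u_col C by (auto simp: cols_def)
    have "(transpose_mat C *\<^sub>v y) $ j = col C j \<bullet> y" using j C by simp
    then show ?thesis using Ty j u by simp
  qed
  have "y \<bullet> y = (\<Sum>u\<in>A. (a u \<cdot>\<^sub>v u) \<bullet> y)"
    unfolding y_eq lincomb_def
    by (rule finsum_scalar_prod_sum) (use A cols y y_eq in \<open>auto simp: lincomb_def\<close>)
  also have "\<dots> = 0" using A cols orth y by (intro sum.neutral) (auto simp: subset_iff)
  finally show ?thesis using real_scalar_prod_self_eq_0_iff[OF y] by simp
qed

lemma gram_mat_inverse:
  "inv_mat (C * transpose_mat C) \<in> carrier_mat r r \<and>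
   C * transpose_mat C * inv_mat (C * transpose_mat C) = 1\<^sub>m r \<and>
   inv_mat (C * transpose_mat C) * (C * transpose_mat C) = 1\<^sub>m r"
proof -
  let ?G = "C * transpose_mat C"
  have G: "?G \<in> carrier_mat r r" using C by simp
  have "y = 0\<^sub>v r" if y: "y \<in> carrier_vec r" and Gy: "?G *\<^sub>v y = 0\<^sub>v r" for y
  proof -
    have Ty: "transpose_mat C *\<^sub>v y \<in> carrier_vec k" using C y by simp
    have "(transpose_mat C *\<^sub>v y) \<bullet> (transpose_mat C *\<^sub>v y) = y \<bullet> (?G *\<^sub>v y)"
      using transpose_vec_mult_scalar[OF C Ty y] C y by simp
    also have "\<dots> = 0" using Gy y by simp
    finally show ?thesis
      using real_scalar_prod_self_eq_0_iff[OF Ty] transpose_mult_vec_eq_0_imp_eq_0[OF y] by simp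
  qed
  then have "det ?G \<noteq> 0" using det_0_iff_vec_prod_zero_field[OF G] by blast
  then have "?G \<in> Units (ring_mat TYPE(real) r ())" by (rule det_non_zero_imp_unit[OF G])
  then obtain B where "mat_inverse ?G = Some B"
    using mat_inverse(1)[OF G, where b = "()"] by (cases "mat_inverse ?G") auto
  then have B: "B \<in> carrier_mat r r \<and> ?G * B = 1\<^sub>m r \<and> B * ?G = 1\<^sub>m r"
    using mat_inverse(2)[OF G] by auto
  have "dim_row ?G = r" using C by simp
  then show ?thesis unfolding inv_mat_def by (simp only:) (rule someI[of _ B], rule B)
qed

lemma proj_mat_carrier: "proj_mat C \<in> carrier_mat k k"
proof -
  have "inv_mat (C * transpose_mat C) \<in> carrier_mat r r" using gram_mat_inverse by blast
  then show ?thesis unfolding proj_mat_def using C by (meson mult_carrier_mat transpose_carrier_mat)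
qed

lemma transpose_proj_mat: "transpose_mat (proj_mat C) = proj_mat C"
proof -
  let ?G = "C * transpose_mat C" and ?H = "inv_mat (C * transpose_mat C)"
  have G: "?G \<in> carrier_mat r r" and H: "?H \<in> carrier_mat r r"
    and GH: "?G * ?H = 1\<^sub>m r" and HG: "?H * ?G = 1\<^sub>m r"
    using gram_mat_inverse C by auto
  have GT: "transpose_mat ?G = ?G"
    using C by (simp add: transpose_mult[OF C])
  have "transpose_mat ?H = transpose_mat ?H * (?G * ?H)" using GH H by simp
  also have "\<dots> = transpose_mat (?G * ?H) * ?H"
    using G H by (simp add: assoc_mult_mat[of _ r r _ r _ r] transpose_mult[OF G H] GT)
  also have "\<dots> = ?H" using GH H by simp
  finally have HT: "transpose_mat ?H = ?H" .
  have CT: "transpose_mat C \<in> carrier_mat k r" using C by simp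
  have "transpose_mat (proj_mat C) = transpose_mat C * transpose_mat (transpose_mat C * ?H)"
    unfolding proj_mat_def by (rule transpose_mult[OF mult_carrier_mat[OF CT H] C])
  also have "transpose_mat (transpose_mat C * ?H) = ?H * C"
    using transpose_mult[OF CT H] HT by simp
  also have "transpose_mat C * (?H * C) = proj_mat C"
    unfolding proj_mat_def using assoc_mult_mat[OF CT H C] by simp
  finally show ?thesis .
qed

lemma mult_proj_mat: "C * proj_mat C = C"
proof -
  let ?G = "C * transpose_mat C" and ?H = "inv_mat (C * transpose_mat C)"
  have H: "?H \<in> carrier_mat r r" and GH: "?G * ?H = 1\<^sub>m r"
    using gram_mat_inverse by auto
  have "C * proj_mat C = (?G * ?H) * C"
    unfolding proj_mat_def using C H
    by (simp add: assoc_mult_mat[of _ r k _ r _ r] assoc_mult_mat[of _ r r _ r _ k]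
        assoc_mult_mat[of _ r k _ r _ k])
  then show ?thesis using GH C by simp
qed

lemma proj_mat_idem: "proj_mat C * proj_mat C = proj_mat C"
proof -
  let ?H = "inv_mat (C * transpose_mat C)"
  have H: "?H \<in> carrier_mat r r" using gram_mat_inverse by auto
  have "proj_mat C * proj_mat C = transpose_mat C * ?H * (C * proj_mat C)"
    unfolding proj_mat_def[of C] using C H proj_mat_carrier
    by (simp add: proj_mat_def assoc_mult_mat[of _ k r _ r _ k] assoc_mult_mat[of _ k r _ k _ k]
        assoc_mult_mat[of _ r r _ k _ k])
  also have "\<dots> = proj_mat C" unfolding mult_proj_mat by (simp add: proj_mat_def)
  finally show ?thesis .
qed

lemma mult_vec_eq_0_if_proj_mat_mult_vec_eq_0:
  assumes v: "v \<in> carrier_vec k" and Pv: "proj_mat C *\<^sub>v v = 0\<^sub>v k"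
  shows "C *\<^sub>v v = 0\<^sub>v r"
proof -
  have "C *\<^sub>v v = C *\<^sub>v (proj_mat C *\<^sub>v v)"
    using mult_proj_mat proj_mat_carrier C v by (metis assoc_mult_mat_vec)
  also have "\<dots> = 0\<^sub>v r" using Pv C by (intro eq_vecI) auto
  finally show ?thesis .
qed

lemma scalar_prod_proj_mat_mult_vec:
  assumes w: "w \<in> carrier_vec k"
  shows "(proj_mat C *\<^sub>v w) \<bullet> (proj_mat C *\<^sub>v w) = w \<bullet> (proj_mat C *\<^sub>v w)"
proof -
  let ?P = "proj_mat C"
  have P: "?P \<in> carrier_mat k k" by (rule proj_mat_carrier)
  have "(?P *\<^sub>v w) \<bullet> (?P *\<^sub>v w) = (transpose_mat ?P *\<^sub>v w) \<bullet> (?P *\<^sub>v w)"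
    by (simp add: transpose_proj_mat)
  also have "\<dots> = w \<bullet> (?P *\<^sub>v (?P *\<^sub>v w))"
    using P w by (intro transpose_vec_mult_scalar) auto
  also have "?P *\<^sub>v (?P *\<^sub>v w) = ?P *\<^sub>v w"
    using P w proj_mat_idem by (metis assoc_mult_mat_vec)
  finally show ?thesis .
qed

lemma scalar_prod_neg_half_proj_mat:
  assumes d: "d \<in> carrier_vec k" and c: "c = (- (1/2)) \<cdot>\<^sub>v (proj_mat C *\<^sub>v d)"
  shows "c \<bullet> d = -2 * (c \<bullet> c)"
proof -
  let ?Pd = "proj_mat C *\<^sub>v d"
  have Pd: "?Pd \<in> carrier_vec k" using proj_mat_carrier d by simp
  have "c \<bullet> c = 1/4 * (d \<bullet> ?Pd)"
    unfolding c using Pd scalar_prod_proj_mat_mult_vec[OF d] by simp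
  moreover have "c \<bullet> d = - (1/2) * (d \<bullet> ?Pd)"
    unfolding c using Pd d comm_scalar_prod[OF Pd d] by simp
  ultimately show ?thesis by simp
qed

end

lemma index_blk [simp]:
  "p < n \<Longrightarrow> blk n x i $ p = x $ (i * n + p)" "dim_vec (blk n x i) = n"
  by (simp_all add: blk_def)

lemma blk_carrier [simp]: "blk n x i \<in> carrier_vec n"
  by (simp add: blk_def)

lemma blk_index_less: "i < m \<Longrightarrow> p < n \<Longrightarrow> i * n + p < m * (n :: nat)"
proof -
  assume "i < m" and "p < n"
  then have "i * n + p < Suc i * n" by simp
  also have "\<dots> \<le> m * n" using \<open>i < m\<close> by (intro mult_le_mono1) simp
  finally show ?thesis .
qed

lemma blk_div_mod: "a < m * n \<Longrightarrow> blk n x (a div n) $ (a mod n) = x $ a"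
  by (cases "n = 0") simp_all

lemma vec_eq_if_blk_eq:
  assumes "x \<in> carrier_vec (m * n)" and "y \<in> carrier_vec (m * n)"
    and "\<And>i. i < m \<Longrightarrow> blk n x i = blk n y i"
  shows "x = y"
proof (rule eq_vecI)
  fix a assume "a < dim_vec y"
  then have a: "a < m * n" using assms(2) by simp
  then show "x $ a = y $ a"
    using assms(3)[OF less_mult_imp_div_less[OF a]] blk_div_mod[OF a] by metis
qed (use assms in simp)

lemma blk_zero_vec: "i < m \<Longrightarrow> blk n (0\<^sub>v (m * n)) i = 0\<^sub>v n"
  by (intro eq_vecI) (simp_all add: blk_index_less)

lemma blk_minus:
  assumes "x \<in> carrier_vec (m * n)" and "y \<in> carrier_vec (m * n)" and "i < m"
  shows "blk n (x - y) i = blk n x i - blk n y i"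
  using assms by (intro eq_vecI) (simp_all add: blk_index_less)

lemma blk_eq_mult_vec:
  assumes "i < m" and "x \<in> carrier_vec (m * n)"
  shows "blk n x i = mat n (m * n) (\<lambda>(p, b). if b = i * n + p then 1 else 0) *\<^sub>v x"
proof (rule eq_vecI)
  fix p assume "p < dim_vec (mat n (m * n) (\<lambda>(p, b). if b = i * n + p then 1 else 0) *\<^sub>v x)"
  then have p: "p < n" by simp
  have "(mat n (m * n) (\<lambda>(p, b). if b = i * n + p then 1 else 0) *\<^sub>v x) $ p
    = unit_vec (m * n) (i * n + p) \<bullet> x"
    using p by (simp add: unit_vec_def)
  also have "\<dots> = blk n x i $ p"
    using p assms blk_index_less[OF assms(1) p] by simp
  finally show "blk n x i $ p = (mat n (m * n) (\<lambda>(p, b). if b = i * n + p then 1 else 0) *\<^sub>v x) $ p"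
    by simp
qed simp

lemma periodic_vecs_iff_blk_eq:
  assumes x: "x \<in> carrier_vec (m * n)"
  shows "x \<in> periodic_vecs m n \<longleftrightarrow> (\<forall>i<m. blk n x i = blk n x 0)"
proof
  assume "x \<in> periodic_vecs m n"
  then have per: "\<And>a. a < m * n \<Longrightarrow> x $ a = x $ (a mod n)"
    unfolding periodic_vecs_def by blast
  show "\<forall>i<m. blk n x i = blk n x 0"
    using per[OF blk_index_less] by (auto intro!: eq_vecI)
next
  assume blk_eq: "\<forall>i<m. blk n x i = blk n x 0"
  have "x $ a = x $ (a mod n)" if a: "a < m * n" for a
  proof -
    have "n > 0" using a by (cases n) auto
    then show ?thesis
      using blk_eq less_mult_imp_div_less[OF a] blk_div_mod[OF a]
      by (metis index_blk(1) mod_less_divisor mult_0 add_0)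
  qed
  then show "x \<in> periodic_vecs m n" using x unfolding periodic_vecs_def by blast
qed

lemma pred_cyc_less: "0 < m \<Longrightarrow> pred_cyc m i < m"
  by (simp add: pred_cyc_def)

lemma sum_pred_cyc:
  assumes m: "0 < m"
  shows "(\<Sum>i<m. g (pred_cyc m i)) = (\<Sum>i<m. g i)"
proof (rule sum.reindex_bij_witness[of _ "\<lambda>i. (i + 1) mod m" "pred_cyc m"])
  fix i assume "i \<in> {..<m}"
  then have i: "i < m" by simp
  show "pred_cyc m i \<in> {..<m}" and "(i + 1) mod m \<in> {..<m}"
    using m by (simp_all add: pred_cyc_def)
  have "(pred_cyc m i + 1) mod m = (i + m - 1 + 1) mod m"
    unfolding pred_cyc_def by (rule mod_add_left_eq)
  also have "\<dots> = i" using m i by simp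
  finally show "(pred_cyc m i + 1) mod m = i" .
  have "pred_cyc m ((i + 1) mod m) = ((i + 1) mod m + (m - 1)) mod m"
    unfolding pred_cyc_def using m by simp
  also have "\<dots> = (i + 1 + (m - 1)) mod m" by (rule mod_add_left_eq)
  also have "\<dots> = i" using m i by simp
  finally show "pred_cyc m ((i + 1) mod m) = i" .
qed simp

definition cycle_diff :: "nat \<Rightarrow> nat \<Rightarrow> real vec \<Rightarrow> nat \<Rightarrow> real vec" where
  "cycle_diff m n x i = blk n x i - blk n x (pred_cyc m i)"

lemma cycle_diff_carrier [simp]: "cycle_diff m n x i \<in> carrier_vec n"
  by (simp add: cycle_diff_def)

lemma sum_scalar_prod_cycle_diff:
  assumes m: "0 < m" and c: "c \<in> carrier_vec n"
  shows "(\<Sum>i<m. c \<bullet> cycle_diff m n x i) = 0"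
proof -
  have "(\<Sum>i<m. c \<bullet> cycle_diff m n x i) = (\<Sum>i<m. c \<bullet> blk n x i) - (\<Sum>i<m. c \<bullet> blk n x (pred_cyc m i))"
    using c by (simp add: cycle_diff_def scalar_prod_minus_distrib[of _ n] sum_subtractf)
  then show ?thesis using sum_pred_cyc[OF m, of "\<lambda>i. c \<bullet> blk n x i"] by simp
qed

lemma mat_mult_vec_eq_if_linear_coordinates:
  fixes f :: "'a :: comm_ring_1 vec \<Rightarrow> 'a vec"
  assumes x: "x \<in> carrier_vec N" and dim: "dim_vec (f x) = N"
    and lin: "\<And>a. a < N \<Longrightarrow> \<exists>r \<in> carrier_vec N. \<forall>y \<in> carrier_vec N. f y $ a = r \<bullet> y"
  shows "mat N N (\<lambda>(a, b). f (unit_vec N b) $ a) *\<^sub>v x = f x"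
proof (rule eq_vecI)
  fix a assume "a < dim_vec (f x)"
  then have a: "a < N" using dim by simp
  then obtain r where r: "r \<in> carrier_vec N" and f: "\<And>y. y \<in> carrier_vec N \<Longrightarrow> f y $ a = r \<bullet> y"
    using lin by blast
  have "row (mat N N (\<lambda>(a, b). f (unit_vec N b) $ a)) a = r"
    using a r f by (intro eq_vecI) auto
  then show "(mat N N (\<lambda>(a, b). f (unit_vec N b) $ a) *\<^sub>v x) $ a = f x $ a"
    using a f[OF x] by simp
qed (use dim in simp)

lemma char_matrix_mult_vec:
  assumes "A \<in> carrier_mat k k" and "x \<in> carrier_vec k"
  shows "char_matrix A e *\<^sub>v x = A *\<^sub>v x - e \<cdot>\<^sub>v x"
  using assms by (intro eq_vecI) (auto simp: char_matrix_def add_scalar_prod_distrib[of _ k])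

section \<open>The cyclic projection matrix\<close>

definition well_configured :: "nat \<Rightarrow> nat \<Rightarrow> (nat \<Rightarrow> real mat) \<Rightarrow> bool" where
  "well_configured m n C \<longleftrightarrow> (\<forall>x :: nat \<Rightarrow> real vec. (\<forall>i<m. x i \<in> carrier_vec n) \<longrightarrow>
     (\<forall>i<m. C i *\<^sub>v x i = C i *\<^sub>v x (pred_cyc m i)) \<longrightarrow> (\<forall>i<m. \<forall>j<m. x i = x j))"

context
  fixes m n :: nat and C :: "nat \<Rightarrow> real mat"
  assumes m: "0 < m"
    and dim_col_C: "\<And>i. i < m \<Longrightarrow> dim_col (C i) = n"
    and full_row_rank_C: "\<And>i. i < m \<Longrightarrow> full_row_rank (C i)"
begin

lemma C_carrier: "i < m \<Longrightarrow> C i \<in> carrier_mat (dim_row (C i)) n"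
  by (rule carrier_matI) (simp_all add: dim_col_C)

lemma proj_mat_C_carrier:
  assumes "i < m"
  shows "proj_mat (C i) \<in> carrier_mat n n"
  by (rule proj_mat_carrier[OF C_carrier[OF assms] full_row_rank_C[OF assms]])

lemma cyc_matrix_carrier: "cyc_matrix m n C \<in> carrier_mat (m * n) (m * n)"
  unfolding cyc_matrix_def by (rule mat_carrier)

lemma cyc_map_carrier: "cyc_map m n C x \<in> carrier_vec (m * n)"
  unfolding cyc_map_def by (rule vec_carrier)

lemma blk_cyc_map:
  assumes i: "i < m"
  shows "blk n (cyc_map m n C x) i =
    blk n x i - (1/2) \<cdot>\<^sub>v (proj_mat (C i) *\<^sub>v cycle_diff m n x i)"
proof (rule eq_vecI)
  fix p assume "p < dim_vec (blk n x i - (1/2) \<cdot>\<^sub>v (proj_mat (C i) *\<^sub>v cycle_diff m n x i))"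
  then have p: "p < n" using proj_mat_C_carrier[OF i] by simp
  have div_mod: "(i * n + p) div n = i" "(i * n + p) mod n = p" using p by auto
  have "blk n (cyc_map m n C x) i $ p = cyc_map m n C x $ (i * n + p)"
    using p by simp
  also have "\<dots> = x $ (i * n + p) - 1/2 * (proj_mat (C i) *\<^sub>v cycle_diff m n x i) $ p"
    unfolding cyc_map_def index_vec[OF blk_index_less[OF i p]] div_mod cycle_diff_def ..
  also have "\<dots> = (blk n x i - (1/2) \<cdot>\<^sub>v (proj_mat (C i) *\<^sub>v cycle_diff m n x i)) $ p"
    using p proj_mat_C_carrier[OF i] by simp
  finally show "blk n (cyc_map m n C x) i $ p =
    (blk n x i - (1/2) \<cdot>\<^sub>v (proj_mat (C i) *\<^sub>v cycle_diff m n x i)) $ p" .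
qed (use proj_mat_C_carrier[OF i] in simp)

(* Coordinate a = i n + p of cyc_map is the linear form x_a - 1/2 <row p of P_i, S_i x - S_(i-1) x>,
   where the 0/1 matrix S_j selects block j. *)
lemma cyc_map_linear_coordinate:
  assumes a: "a < m * n"
  shows "\<exists>r \<in> carrier_vec (m * n). \<forall>x \<in> carrier_vec (m * n). cyc_map m n C x $ a = r \<bullet> x"
proof -
  define i p where "i = a div n" and "p = a mod n"
  define S :: "nat \<Rightarrow> real mat" where "S j = mat n (m * n) (\<lambda>(p, b). if b = j * n + p then 1 else 0)" for j
  define D where "D = S i - S (pred_cyc m i)"
  define w where "w = row (proj_mat (C i)) p"
  have i: "i < m" using a by (simp add: i_def less_mult_imp_div_less)
  have p: "p < n" using a p_def by (cases n) auto
  have P: "proj_mat (C i) \<in> carrier_mat n n" by (rule proj_mat_C_carrier[OF i])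
  have S: "S j \<in> carrier_mat n (m * n)" for j by (simp add: S_def)
  have D: "D \<in> carrier_mat n (m * n)" unfolding D_def by (rule minus_carrier_mat[OF S])
  have w: "w \<in> carrier_vec n" using P p by (simp add: w_def)
  show ?thesis
  proof (intro bexI ballI)
    fix x :: "real vec" assume x: "x \<in> carrier_vec (m * n)"
    have "cycle_diff m n x i = S i *\<^sub>v x - S (pred_cyc m i) *\<^sub>v x"
      unfolding cycle_diff_def S_def
      using blk_eq_mult_vec[OF i x] blk_eq_mult_vec[OF pred_cyc_less[OF m] x] by simp
    also have "\<dots> = D *\<^sub>v x"
      unfolding D_def by (rule minus_mult_distrib_mat_vec[OF S S x, symmetric])
    finally have cd: "cycle_diff m n x i = D *\<^sub>v x" .
    have "cyc_map m n C x $ a = x $ a - 1/2 * (proj_mat (C i) *\<^sub>v cycle_diff m n x i) $ p"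
      using a unfolding cyc_map_def cycle_diff_def i_def p_def by simp
    also have "\<dots> = x $ a - 1/2 * (w \<bullet> (D *\<^sub>v x))"
      unfolding cd w_def using P p by simp
    also have "\<dots> = unit_vec (m * n) a \<bullet> x - 1/2 * ((transpose_mat D *\<^sub>v w) \<bullet> x)"
      by (simp only: scalar_prod_left_unit[OF x a] transpose_vec_mult_scalar[OF D x w])
    also have "\<dots> = (unit_vec (m * n) a - (1/2) \<cdot>\<^sub>v (transpose_mat D *\<^sub>v w)) \<bullet> x"
      using x D w by (simp add: minus_scalar_prod_distrib[of _ "m * n"])
    finally show "cyc_map m n C x $ a = (unit_vec (m * n) a - (1/2) \<cdot>\<^sub>v (transpose_mat D *\<^sub>v w)) \<bullet> x" .
  qed (use D w in simp)
qed

lemma cyc_matrix_mult_vec: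
  assumes "x \<in> carrier_vec (m * n)"
  shows "cyc_matrix m n C *\<^sub>v x = cyc_map m n C x"
  unfolding cyc_matrix_def
  by (rule mat_mult_vec_eq_if_linear_coordinates[OF assms _ cyc_map_linear_coordinate])
    (simp add: cyc_map_def)

lemma blk_char_matrix_cyc_matrix_mult_vec:
  assumes i: "i < m" and x: "x \<in> carrier_vec (m * n)"
  shows "blk n (char_matrix (cyc_matrix m n C) 1 *\<^sub>v x) i =
    (- (1/2)) \<cdot>\<^sub>v (proj_mat (C i) *\<^sub>v cycle_diff m n x i)"
proof -
  have "char_matrix (cyc_matrix m n C) 1 *\<^sub>v x = cyc_map m n C x - x"
    using char_matrix_mult_vec[OF cyc_matrix_carrier x] cyc_matrix_mult_vec[OF x] by simp
  then have "blk n (char_matrix (cyc_matrix m n C) 1 *\<^sub>v x) i = blk n (cyc_map m n C x) i - blk n x i"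
    using blk_minus[OF cyc_map_carrier x i] by simp
  also have "\<dots> = (- (1/2)) \<cdot>\<^sub>v (proj_mat (C i) *\<^sub>v cycle_diff m n x i)"
    unfolding blk_cyc_map[OF i] using proj_mat_C_carrier[OF i] by (intro eq_vecI) auto
  finally show ?thesis .
qed

lemma char_matrix_cyc_matrix_mult_vec_eq_0_iff:
  assumes x: "x \<in> carrier_vec (m * n)"
  shows "char_matrix (cyc_matrix m n C) 1 *\<^sub>v x = 0\<^sub>v (m * n) \<longleftrightarrow>
    (\<forall>i<m. proj_mat (C i) *\<^sub>v cycle_diff m n x i = 0\<^sub>v n)"
proof -
  let ?z = "char_matrix (cyc_matrix m n C) 1 *\<^sub>v x"
  have z: "?z \<in> carrier_vec (m * n)"
    by (rule mult_mat_vec_carrier[OF char_matrix_closed[OF cyc_matrix_carrier] x])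
  have "?z = 0\<^sub>v (m * n) \<longleftrightarrow> (\<forall>i<m. blk n ?z i = 0\<^sub>v n)"
    using vec_eq_if_blk_eq[OF z zero_carrier_vec] blk_zero_vec by metis
  also have "\<dots> \<longleftrightarrow> (\<forall>i<m. proj_mat (C i) *\<^sub>v cycle_diff m n x i = 0\<^sub>v n)"
  proof -
    have "blk n ?z i = 0\<^sub>v n \<longleftrightarrow> proj_mat (C i) *\<^sub>v cycle_diff m n x i = 0\<^sub>v n"
      if i: "i < m" for i
      using blk_char_matrix_cyc_matrix_mult_vec[OF i x]
        mult_mat_vec_carrier[OF proj_mat_C_carrier[OF i] cycle_diff_carrier]
      by (auto simp: vec_eq_iff)
    then show ?thesis by blast
  qed
  finally show ?thesis .
qed

lemma proj_mat_mult_cycle_diff_eq_0_iff: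
  assumes wc: "well_configured m n C" and x: "x \<in> carrier_vec (m * n)"
  shows "(\<forall>i<m. proj_mat (C i) *\<^sub>v cycle_diff m n x i = 0\<^sub>v n) \<longleftrightarrow>
    (\<forall>i<m. blk n x i = blk n x 0)"
proof
  assume P: "\<forall>i<m. proj_mat (C i) *\<^sub>v cycle_diff m n x i = 0\<^sub>v n"
  have "C i *\<^sub>v blk n x i = C i *\<^sub>v blk n x (pred_cyc m i)" if i: "i < m" for i
  proof -
    have "C i *\<^sub>v cycle_diff m n x i = 0\<^sub>v (dim_row (C i))"
      using P i by (intro mult_vec_eq_0_if_proj_mat_mult_vec_eq_0[OF C_carrier full_row_rank_C]) auto
    then have "C i *\<^sub>v blk n x i - C i *\<^sub>v blk n x (pred_cyc m i) = 0\<^sub>v (dim_row (C i))"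
      unfolding cycle_diff_def by (simp add: mult_minus_distrib_mat_vec[OF C_carrier[OF i]])
    then show ?thesis by (simp add: vec_eq_iff)
  qed
  then have "\<forall>i<m. \<forall>j<m. blk n x i = blk n x j"
    using wc unfolding well_configured_def by simp
  then show "\<forall>i<m. blk n x i = blk n x 0"
    using m by blast
next
  assume blk_eq: "\<forall>i<m. blk n x i = blk n x 0"
  show "\<forall>i<m. proj_mat (C i) *\<^sub>v cycle_diff m n x i = 0\<^sub>v n"
  proof (intro allI impI)
    fix i assume i: "i < m"
    have "cycle_diff m n x i = 0\<^sub>v n"
      unfolding cycle_diff_def blk_eq[rule_format, OF i] blk_eq[rule_format, OF pred_cyc_less[OF m]]
      by simp
    then show "proj_mat (C i) *\<^sub>v cycle_diff m n x i = 0\<^sub>v n"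
      using proj_mat_C_carrier[OF i] by (intro eq_vecI) auto
  qed
qed

lemma mat_kernel_char_matrix_cyc_matrix:
  assumes wc: "well_configured m n C"
  shows "mat_kernel (char_matrix (cyc_matrix m n C) 1) = periodic_vecs m n"
proof (rule Set.set_eqI)
  fix x :: "real vec"
  note ker = mat_kernel[OF char_matrix_closed[OF cyc_matrix_carrier]]
  show "x \<in> mat_kernel (char_matrix (cyc_matrix m n C) 1) \<longleftrightarrow> x \<in> periodic_vecs m n"
  proof (cases "x \<in> carrier_vec (m * n)")
    case False
    then show ?thesis unfolding ker by (simp add: periodic_vecs_def)
  next
    case x: True
    show ?thesis
      unfolding ker periodic_vecs_iff_blk_eq[OF x] proj_mat_mult_cycle_diff_eq_0_iff[OF wc x, symmetric]
      using char_matrix_cyc_matrix_mult_vec_eq_0_iff[OF x] x by simp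
  qed
qed

lemma char_matrix_cyc_matrix_mult_vec_eq_0_if_square:
  assumes wc: "well_configured m n C" and x: "x \<in> carrier_vec (m * n)"
    and N2x: "char_matrix (cyc_matrix m n C) 1 *\<^sub>v (char_matrix (cyc_matrix m n C) 1 *\<^sub>v x) = 0\<^sub>v (m * n)"
  shows "char_matrix (cyc_matrix m n C) 1 *\<^sub>v x = 0\<^sub>v (m * n)"
proof -
  let ?N = "char_matrix (cyc_matrix m n C) 1"
  let ?z = "?N *\<^sub>v x"
  have N: "?N \<in> carrier_mat (m * n) (m * n)" using cyc_matrix_carrier by simp
  have z: "?z \<in> carrier_vec (m * n)" using N x by simp
  define c where "c = blk n ?z 0"
  have c: "c \<in> carrier_vec n" by (simp add: c_def)
  have "?z \<in> mat_kernel ?N" by (rule mat_kernelI[OF N z N2x])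
  then have "?z \<in> periodic_vecs m n" unfolding mat_kernel_char_matrix_cyc_matrix[OF wc] .
  then have blk_eq: "\<forall>i<m. blk n ?z i = c"
    using periodic_vecs_iff_blk_eq[OF z] unfolding c_def by blast
  have c_eq: "c = (- (1/2)) \<cdot>\<^sub>v (proj_mat (C i) *\<^sub>v cycle_diff m n x i)" if i: "i < m" for i
    using blk_eq i blk_char_matrix_cyc_matrix_mult_vec[OF i x] by simp
  have c_cycle_diff: "c \<bullet> cycle_diff m n x i = -2 * (c \<bullet> c)" if i: "i < m" for i
    by (rule scalar_prod_neg_half_proj_mat[OF C_carrier[OF i] full_row_rank_C[OF i]
          cycle_diff_carrier c_eq[OF i]])
  have "0 = (\<Sum>i<m. c \<bullet> cycle_diff m n x i)"
    using sum_scalar_prod_cycle_diff[OF m c] by simp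
  also have "\<dots> = - 2 * real m * (c \<bullet> c)" using c_cycle_diff by simp
  finally have "c = 0\<^sub>v n" using m real_scalar_prod_self_eq_0_iff[OF c] by simp
  then show ?thesis
    using blk_eq blk_zero_vec by (intro vec_eq_if_blk_eq[OF z]) auto
qed

lemma mat_kernel_char_matrix_cyc_matrix_square:
  assumes wc: "well_configured m n C"
  shows "mat_kernel (char_matrix (cyc_matrix m n C) 1 ^\<^sub>m 2) =
    mat_kernel (char_matrix (cyc_matrix m n C) 1)"
proof -
  let ?N = "char_matrix (cyc_matrix m n C) 1"
  have N: "?N \<in> carrier_mat (m * n) (m * n)" using cyc_matrix_carrier by simp
  have sq: "?N ^\<^sub>m 2 = ?N * ?N" using N by (simp add: numeral_2_eq_2)
  have N2: "?N * ?N \<in> carrier_mat (m * n) (m * n)" using N by simp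
  have "(?N * ?N) *\<^sub>v x = 0\<^sub>v (m * n) \<longleftrightarrow> ?N *\<^sub>v x = 0\<^sub>v (m * n)"
    if x: "x \<in> carrier_vec (m * n)" for x
  proof -
    have "(?N * ?N) *\<^sub>v x = ?N *\<^sub>v (?N *\<^sub>v x)" using N x by simp
    moreover have "?N *\<^sub>v 0\<^sub>v (m * n) = 0\<^sub>v (m * n)" using N by (intro eq_vecI) auto
    ultimately show ?thesis
      using char_matrix_cyc_matrix_mult_vec_eq_0_if_square[OF wc x] by auto
  qed
  then show ?thesis unfolding sq mat_kernel[OF N2] mat_kernel[OF N] by blast
qed

end

theorem lemma12:
  fixes m n :: nat and C :: "nat \<Rightarrow> real mat"
  assumes "m \<ge> 2"
    and "\<And>i. i < m \<Longrightarrow> dim_col (C i) = n"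
    and "\<And>i. i < m \<Longrightarrow> full_row_rank (C i)"
    and "\<And>x :: nat \<Rightarrow> real vec. (\<forall>i<m. x i \<in> carrier_vec n) \<Longrightarrow>
           (\<forall>i<m. C i *\<^sub>v x i = C i *\<^sub>v x (pred_cyc m i)) \<Longrightarrow>
           (\<forall>i<m. \<forall>j<m. x i = x j)"
  shows "alg_mult (cyc_matrix m n C) 1 = n \<and> geom_mult (cyc_matrix m n C) 1 = n"
proof -
  let ?M = "cyc_matrix m n C"
  let ?N = "char_matrix ?M 1"
  have m: "0 < m" using assms(1) by simp
  have wc: "well_configured m n C"
    unfolding well_configured_def
  proof (rule allI, intro impI)
    fix x :: "nat \<Rightarrow> real vec"
    assume "\<forall>i<m. x i \<in> carrier_vec n" and "\<forall>i<m. C i *\<^sub>v x i = C i *\<^sub>v x (pred_cyc m i)"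
    then show "\<forall>i<m. \<forall>j<m. x i = x j" by (rule assms(4))
  qed
  have M: "?M \<in> carrier_mat (m * n) (m * n)" by (simp add: cyc_matrix_def)
  have N: "?N \<in> carrier_mat (m * n) (m * n)" using M by simp
  note ker = mat_kernel_char_matrix_cyc_matrix[OF m assms(2,3) wc]
  note ker_square = mat_kernel_char_matrix_cyc_matrix_square[OF m assms(2,3) wc]
  have "geom_mult ?M 1 = n"
    unfolding geom_mult_def by (rule kernel_dim_eq_if_mat_kernel_periodic[OF m N ker])
  moreover have "alg_mult ?M 1 = kernel_dim (map_mat complex_of_real ?N)"
    by (rule alg_mult_eq_kernel_dim_of_real[OF M ker_square])
  moreover have "kernel_dim (map_mat complex_of_real ?N) = n"
    using N mat_kernel_of_real_eq_periodic[OF N ker]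
    by (intro kernel_dim_eq_if_mat_kernel_periodic[OF m]) simp_all
  ultimately show ?thesis by simp
qed

end
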